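(* Let $R$ be a local ring with maximal ideal $\mathfrak m\neq 0$ such that $\mathfrak m^2=0$ and $\mathfrak m=Rx=xR$ for all $x\in\mathfrak m\setminus\{0\}$, and fix $x\in\mathfrak m\setminus\{0\}$. Then for every homomorphism $f:P\to Q$ of free left $R$-modules (respectively finitely generated free left $R$-modules) there exist free (respectively finitely generated free) left $R$-modules $M,N,V,W$ and isomorphisms $P\cong M\oplus N\oplus V$, $Q\cong M\oplus N\oplus W$ under which $f$ corresponds to the map $M\oplus N\oplus V\to M\oplus N\oplus W$ given by the matrix $\begin{pmatrix}1&0&0\\0&\cdot x&0\\0&0&0\end{pmatrix}$, where $\cdot x:N\to N$ denotes right multiplication by $x$ coordinatewise with respect to a basis of $N$.
   Context: Local ring: unique maximal left ideal $\mathfrak m$ (two-sided). *)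

theory Defs
  imports Main
begin

definition left_ideal :: "'a::ring_1 set \<Rightarrow> bool" where
  "left_ideal L \<longleftrightarrow> 0 \<in> L \<and> (\<forall>a\<in>L. \<forall>b\<in>L. a + b \<in> L) \<and> (\<forall>a\<in>L. - a \<in> L)
     \<and> (\<forall>r. \<forall>a\<in>L. r * a \<in> L)"

definition maximal_left_ideal :: "'a::ring_1 set \<Rightarrow> bool" where
  "maximal_left_ideal L \<longleftrightarrow> left_ideal L \<and> L \<noteq> UNIV \<and>
     (\<forall>L'. left_ideal L' \<and> L \<subseteq> L' \<and> L' \<noteq> UNIV \<longrightarrow> L' = L)"

definition local_ring :: "'a::ring_1 itself \<Rightarrow> bool" where
  "local_ring _ \<longleftrightarrow> (\<exists>!L::'a set. maximal_left_ideal L)"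

text \<open>The free left module R^(I) on an index set I: finitely supported functions
  vanishing outside I, with pointwise addition and left scalar multiplication.\<close>
definition fsupp_on :: "'i set \<Rightarrow> ('i \<Rightarrow> 'a::ring_1) set" where
  "fsupp_on I = {v. (\<forall>i. i \<notin> I \<longrightarrow> v i = 0) \<and> finite {i. v i \<noteq> 0}}"

definition lin_on :: "'i set \<Rightarrow> 'j set \<Rightarrow> (('i \<Rightarrow> 'a::ring_1) \<Rightarrow> ('j \<Rightarrow> 'a)) \<Rightarrow> bool" where
  "lin_on I J f \<longleftrightarrow> (\<forall>v\<in>fsupp_on I. f v \<in> fsupp_on J)
     \<and> (\<forall>u\<in>fsupp_on I. \<forall>v\<in>fsupp_on I. f (\<lambda>i. u i + v i) = (\<lambda>j. f u j + f v j))
     \<and> (\<forall>r. \<forall>v\<in>fsupp_on I. f (\<lambda>i. r * v i) = (\<lambda>j. r * f v j))"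

definition lin_iso :: "'i set \<Rightarrow> 'j set \<Rightarrow> (('i \<Rightarrow> 'a::ring_1) \<Rightarrow> ('j \<Rightarrow> 'a)) \<Rightarrow> bool" where
  "lin_iso I J f \<longleftrightarrow> lin_on I J f \<and> bij_betw f (fsupp_on I) (fsupp_on J)"

text \<open>The map M \<oplus> N \<oplus> V \<rightarrow> M \<oplus> N \<oplus> W given by the matrix diag(1, \<cdot>x, 0), where the
  direct sum M \<oplus> N \<oplus> V is R^(A <+> (B <+> C)) and right multiplication by x is
  taken coordinatewise w.r.t. the standard basis of N = R^(B).\<close>
definition diag_map :: "'a::ring_1 \<Rightarrow> (('k + ('k + 'k)) \<Rightarrow> 'a) \<Rightarrow> (('k + ('k + 'k)) \<Rightarrow> 'a)" where
  "diag_map x u = (\<lambda>t. case t of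
       Inl a \<Rightarrow> u (Inl a)
     | Inr (Inl b) \<Rightarrow> u (Inr (Inl b)) * x
     | Inr (Inr d) \<Rightarrow> 0)"

end

theory Submission
  imports Defs
begin

text \<open>
  The method is Gaussian elimination modulo \<open>m\<close>. Well-order the index sets; a vector with some
  unit coordinate has a leading index, its last unit coordinate. A family with distinct leading
  indices (an echelon family) is independent modulo \<open>m\<close> and spans modulo \<open>m\<close> every submodule
  whose leading indices it realises; since \<open>m = xR\<close> and \<open>x m = 0\<close>, independence and spanning
  modulo \<open>m\<close> already make a family a basis (a form of Nakayama's lemma).

  The basis of \<open>R^(J)\<close> consists of echelon representatives \<open>f vA\<close> of the leading indices of the
  image of \<open>f\<close>, vectors \<open>gB\<close> with \<open>x gB = f uB\<close> for the new leading indices of the preimage of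
  the image under \<open>x\<cdot>\<close>, and unit vectors; that of \<open>R^(I)\<close> consists of \<open>vA\<close>, \<open>uB\<close> and an
  echelon family \<open>kC\<close> of the kernel.
\<close>


section \<open>Strict well-orders\<close>

text \<open>Leading coefficients are taken with respect to a strict well-order on an index type;
  every type carries one (well-ordering theorem).\<close>

definition strict_wo :: "('k \<Rightarrow> 'k \<Rightarrow> bool) \<Rightarrow> bool" where
  "strict_wo lt \<longleftrightarrow> transp lt \<and> (\<forall>a b. a \<noteq> b \<longrightarrow> lt a b \<or> lt b a) \<and> wfP lt"

lemma strict_wo_exists: "\<exists>lt :: 'k \<Rightarrow> 'k \<Rightarrow> bool. strict_wo lt"
proof -
  from well_ordering[where 'a='k] obtain r :: "'k rel" where wo: "Well_order r" and fld: "Field r = UNIV"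
    by (elim exE conjE)
  have lin: "strict_linear_order_on UNIV (r - Id)"
    using strict_linear_order_on_diff_Id[of UNIV r] wo fld by (simp add: well_order_on_def)
  have "wf (r - Id)"
    using wo by (simp add: well_order_on_def)
  moreover have "trans (r - Id)" "total_on UNIV (r - Id)"
    using lin by (simp_all add: strict_linear_order_on_def)
  ultimately have "strict_wo (\<lambda>a b. (a, b) \<in> r - Id)"
    unfolding strict_wo_def wfp_wf_eq total_on_def transp_def trans_def by blast
  then show ?thesis by blast
qed

lemma strict_wo_irrefl: "strict_wo lt \<Longrightarrow> \<not> lt a a"
  unfolding strict_wo_def by (meson irreflpD wfp_imp_irreflp)

lemma strict_wo_trans: "strict_wo lt \<Longrightarrow> lt a b \<Longrightarrow> lt b c \<Longrightarrow> lt a c"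
  unfolding strict_wo_def by (meson transpD)

lemma strict_wo_total: "strict_wo lt \<Longrightarrow> a \<noteq> b \<Longrightarrow> lt a b \<or> lt b a"
  unfolding strict_wo_def by blast

lemma strict_wo_wf: "strict_wo lt \<Longrightarrow> wfP lt"
  unfolding strict_wo_def by blast

lemma strict_wo_finite_max:
  assumes wo: "strict_wo lt" and "finite X" "X \<noteq> {}"
  shows "\<exists>a\<in>X. \<forall>b\<in>X. b \<noteq> a \<longrightarrow> lt b a"
  using assms(2,3)
proof (induction X rule: finite_ne_induct)
  case (singleton a)
  then show ?case by simp
next
  case (insert a X)
  then obtain b where b: "b \<in> X" "\<forall>c\<in>X. c \<noteq> b \<longrightarrow> lt c b" by blast
  show ?case
  proof (cases "lt a b")
    case True
    then show ?thesis using b by auto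
  next
    case False
    moreover have "b \<noteq> a" using b(1) insert.hyps(3) by blast
    ultimately have ba: "lt b a" using strict_wo_total[OF wo, of b a] by blast
    have "lt c a" if "c \<in> X" for c
      using b(2) that ba strict_wo_trans[OF wo, of c b a] by (cases "c = b") simp_all
    then show ?thesis by blast
  qed
qed


section \<open>Finitely supported vectors and linear combinations\<close>

lemma fsupp_finite: "c \<in> fsupp_on T \<Longrightarrow> finite {t. c t \<noteq> 0}"
  by (simp add: fsupp_on_def)

lemma fsupp_out: "c \<in> fsupp_on T \<Longrightarrow> t \<notin> T \<Longrightarrow> c t = 0"
  by (simp add: fsupp_on_def)

lemma fsupp_sub: "c \<in> fsupp_on T \<Longrightarrow> c t \<noteq> 0 \<Longrightarrow> t \<in> T"
  by (auto simp add: fsupp_on_def)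

lemma fsupp_I: "(\<And>t. t \<notin> T \<Longrightarrow> c t = 0) \<Longrightarrow> finite {t. c t \<noteq> 0} \<Longrightarrow> c \<in> fsupp_on T"
  by (simp add: fsupp_on_def)

lemma fsupp_mono: "c \<in> fsupp_on T \<Longrightarrow> T \<subseteq> T' \<Longrightarrow> c \<in> fsupp_on T'"
  by (auto simp add: fsupp_on_def)

lemma fsupp_zero: "(\<lambda>t. 0) \<in> fsupp_on T"
  by (simp add: fsupp_on_def)

lemma fsupp_dominated:
  assumes "c \<in> fsupp_on T" and "\<And>t. c t = 0 \<Longrightarrow> d t = 0"
  shows "d \<in> fsupp_on T"
proof (rule fsupp_I)
  show "finite {t. d t \<noteq> 0}"
    using fsupp_finite[OF assms(1)] by (rule finite_subset[rotated]) (auto simp: assms(2))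
qed (simp add: assms(2) fsupp_out[OF assms(1)])

lemma fsupp_map: "g 0 = 0 \<Longrightarrow> c \<in> fsupp_on T \<Longrightarrow> (\<lambda>t. g (c t)) \<in> fsupp_on T"
  by (rule fsupp_dominated[of c]) simp_all

lemma fsupp_map2:
  assumes "g 0 0 = 0" and "u \<in> fsupp_on T" and "v \<in> fsupp_on T"
  shows "(\<lambda>t. g (u t) (v t)) \<in> fsupp_on T"
proof (rule fsupp_I)
  have "{t. g (u t) (v t) \<noteq> 0} \<subseteq> {t. u t \<noteq> 0} \<union> {t. v t \<noteq> 0}"
    using assms(1) by auto
  then show "finite {t. g (u t) (v t) \<noteq> 0}"
    using fsupp_finite[OF assms(2)] fsupp_finite[OF assms(3)] by (simp add: finite_subset)
qed (simp add: assms(1) fsupp_out[OF assms(2)] fsupp_out[OF assms(3)])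

lemma fsupp_add: "u \<in> fsupp_on T \<Longrightarrow> v \<in> fsupp_on T \<Longrightarrow> (\<lambda>t. u t + v t) \<in> fsupp_on T"
  by (rule fsupp_map2) simp_all

lemma fsupp_diff: "u \<in> fsupp_on T \<Longrightarrow> v \<in> fsupp_on T \<Longrightarrow> (\<lambda>t. u t - v t) \<in> fsupp_on T"
  by (rule fsupp_map2) simp_all

lemma fsupp_smul: "u \<in> fsupp_on T \<Longrightarrow> (\<lambda>t. r * u t) \<in> fsupp_on T"
  by (rule fsupp_map) simp_all

lemma fsupp_single:
  assumes "t \<in> T"
  shows "(\<lambda>s. if s = t then r else 0) \<in> fsupp_on T"
proof (rule fsupp_I)
  show "finite {s. (if s = t then r else 0) \<noteq> 0}"
    by (rule finite_subset[of _ "{t}"]) auto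
qed (use assms in auto)

definition restr :: "'t set \<Rightarrow> ('t \<Rightarrow> 'a::zero) \<Rightarrow> 't \<Rightarrow> 'a" where
  "restr S c t = (if t \<in> S then c t else 0)"

lemma restr_finite: "finite {t. c t \<noteq> 0} \<Longrightarrow> finite {t. restr S c t \<noteq> 0}"
  by (erule rev_finite_subset) (auto simp: restr_def)

lemma fsupp_restr:
  assumes "c \<in> fsupp_on T"
  shows "restr S c \<in> fsupp_on (T \<inter> S)"
proof (rule fsupp_I)
  show "finite {t. restr S c t \<noteq> 0}" by (rule restr_finite[OF fsupp_finite[OF assms]])
qed (auto simp: restr_def fsupp_out[OF assms])

definition lc :: "('t \<Rightarrow> 'a::ring_1) \<Rightarrow> ('t \<Rightarrow> 'k \<Rightarrow> 'a) \<Rightarrow> 'k \<Rightarrow> 'a" where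
  "lc c w = (\<lambda>k. \<Sum>t\<in>{t. c t \<noteq> 0}. c t * w t k)"

lemma lc_sum:
  assumes "finite S" "{t. c t \<noteq> 0} \<subseteq> S"
  shows "lc c w k = (\<Sum>t\<in>S. c t * w t k)"
  unfolding lc_def using assms by (intro sum.mono_neutral_left) auto

lemma lc_cong:
  assumes "finite S" "{t. c t \<noteq> 0} \<subseteq> S" "{t. d t \<noteq> 0} \<subseteq> S"
    and "\<And>t k. t \<in> S \<Longrightarrow> c t * w t k = d t * v t k"
  shows "lc c w = lc d v"
proof
  fix k
  have "lc c w k = (\<Sum>t\<in>S. c t * w t k)" by (rule lc_sum[OF assms(1,2)])
  also have "\<dots> = (\<Sum>t\<in>S. d t * v t k)" by (rule sum.cong) (simp_all add: assms(4))
  also have "\<dots> = lc d v k" by (rule lc_sum[OF assms(1,3), symmetric])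
  finally show "lc c w k = lc d v k" .
qed

lemma lc_add:
  assumes "finite {t. c t \<noteq> 0}" "finite {t. d t \<noteq> 0}"
  shows "lc (\<lambda>t. c t + d t) w = (\<lambda>k. lc c w k + lc d w k)"
proof
  fix k
  let ?S = "{t. c t \<noteq> 0} \<union> {t. d t \<noteq> 0}"
  have S: "finite ?S" using assms by simp
  have "lc (\<lambda>t. c t + d t) w k = (\<Sum>t\<in>?S. (c t + d t) * w t k)"
    by (rule lc_sum[OF S]) auto
  also have "\<dots> = lc c w k + lc d w k"
    by (simp add: distrib_right sum.distrib lc_sum[OF S])
  finally show "lc (\<lambda>t. c t + d t) w k = lc c w k + lc d w k" .
qed

lemma lc_smul:
  assumes "finite {t. c t \<noteq> 0}"
  shows "lc (\<lambda>t. r * c t) w = (\<lambda>k. r * lc c w k)"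
proof
  fix k
  have "lc (\<lambda>t. r * c t) w k = (\<Sum>t\<in>{t. c t \<noteq> 0}. (r * c t) * w t k)"
    by (rule lc_sum[OF assms]) auto
  then show "lc (\<lambda>t. r * c t) w k = r * lc c w k"
    by (simp add: lc_def sum_distrib_left mult.assoc)
qed

lemma lc_diff:
  assumes "finite {t. c t \<noteq> 0}" "finite {t. d t \<noteq> 0}"
  shows "lc (\<lambda>t. c t - d t) w = (\<lambda>k. lc c w k - lc d w k)"
proof -
  have "finite {t. - 1 * d t \<noteq> 0}" using assms(2) by simp
  then have "lc (\<lambda>t. c t + - 1 * d t) w = (\<lambda>k. lc c w k + lc (\<lambda>t. - 1 * d t) w k)"
    by (rule lc_add[OF assms(1)])
  then show ?thesis using lc_smul[OF assms(2), of "- 1" w] by simp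
qed

lemma lc_zero: "lc (\<lambda>t. 0) w = (\<lambda>k. 0)"
  by (simp add: lc_def)

lemma lc_single: "lc (\<lambda>s. if s = t then r else 0) w = (\<lambda>k. r * w t k)"
proof
  fix k
  have "lc (\<lambda>s. if s = t then r else 0) w k = (\<Sum>s\<in>{t}. (if s = t then r else 0) * w s k)"
    by (rule lc_sum) auto
  then show "lc (\<lambda>s. if s = t then r else 0) w k = r * w t k" by simp
qed

lemma lc_restr:
  assumes "finite {t. c t \<noteq> 0}"
  shows "lc c w = (\<lambda>k. lc (restr S c) w k + lc (restr (- S) c) w k)"
proof -
  have "c = (\<lambda>t. restr S c t + restr (- S) c t)" by (auto simp: restr_def)
  then have "lc c w = lc (\<lambda>t. restr S c t + restr (- S) c t) w"
    by (rule arg_cong)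
  also have "\<dots> = (\<lambda>k. lc (restr S c) w k + lc (restr (- S) c) w k)"
    by (rule lc_add[OF restr_finite[OF assms] restr_finite[OF assms]])
  finally show ?thesis .
qed

lemma lc_fsupp:
  assumes c: "c \<in> fsupp_on T" and w: "\<And>t. t \<in> T \<Longrightarrow> w t \<in> fsupp_on K"
  shows "lc c w \<in> fsupp_on K"
proof (rule fsupp_I)
  fix k assume "k \<notin> K"
  then show "lc c w k = 0"
    unfolding lc_def using fsupp_sub[OF c] fsupp_out[OF w] by (intro sum.neutral) auto
next
  have "{k. lc c w k \<noteq> 0} \<subseteq> (\<Union>t\<in>{t. c t \<noteq> 0}. {k. w t k \<noteq> 0})"
  proof
    fix k assume "k \<in> {k. lc c w k \<noteq> 0}"
    then obtain t where "c t \<noteq> 0" "c t * w t k \<noteq> 0"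
      unfolding lc_def by (auto elim: sum.not_neutral_contains_not_neutral)
    then show "k \<in> (\<Union>t\<in>{t. c t \<noteq> 0}. {k. w t k \<noteq> 0})" by auto
  qed
  moreover have "finite (\<Union>t\<in>{t. c t \<noteq> 0}. {k. w t k \<noteq> 0})"
    using fsupp_finite[OF c] fsupp_sub[OF c] fsupp_finite[OF w] by blast
  ultimately show "finite {k. lc c w k \<noteq> 0}" by (rule finite_subset)
qed


section \<open>Homomorphisms of free modules\<close>

lemma lin_add: "lin_on I J f \<Longrightarrow> u \<in> fsupp_on I \<Longrightarrow> v \<in> fsupp_on I \<Longrightarrow>
    f (\<lambda>i. u i + v i) = (\<lambda>j. f u j + f v j)"
  by (simp add: lin_on_def)

lemma lin_smul: "lin_on I J f \<Longrightarrow> v \<in> fsupp_on I \<Longrightarrow> f (\<lambda>i. r * v i) = (\<lambda>j. r * f v j)"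
  by (simp add: lin_on_def)

lemma lin_in: "lin_on I J f \<Longrightarrow> v \<in> fsupp_on I \<Longrightarrow> f v \<in> fsupp_on J"
  by (simp add: lin_on_def)

lemma lin_zero: "lin_on I J f \<Longrightarrow> f (\<lambda>i. 0) = (\<lambda>j. 0)"
  using lin_smul[OF _ fsupp_zero, of I J f 0] by simp

lemma lin_diff:
  assumes f: "lin_on I J f" and u: "u \<in> fsupp_on I" and v: "v \<in> fsupp_on I"
  shows "f (\<lambda>i. u i - v i) = (\<lambda>j. f u j - f v j)"
proof -
  have "f (\<lambda>i. u i + - 1 * v i) = (\<lambda>j. f u j + f (\<lambda>i. - 1 * v i) j)"
    by (rule lin_add[OF f u fsupp_smul[OF v]])
  also have "\<dots> = (\<lambda>j. f u j + - 1 * f v j)"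
    by (simp only: lin_smul[OF f v])
  finally show ?thesis by simp
qed

lemma lin_sum:
  assumes f: "lin_on I J f" and "finite S" and "\<And>t. t \<in> S \<Longrightarrow> g t \<in> fsupp_on I"
  shows "(\<lambda>i. \<Sum>t\<in>S. g t i) \<in> fsupp_on I \<and> f (\<lambda>i. \<Sum>t\<in>S. g t i) = (\<lambda>j. \<Sum>t\<in>S. f (g t) j)"
  using assms(2,3)
proof (induction S rule: finite_induct)
  case empty
  show ?case using lin_zero[OF f] fsupp_zero by simp
next
  case (insert a S)
  then have IH: "(\<lambda>i. \<Sum>t\<in>S. g t i) \<in> fsupp_on I"
      "f (\<lambda>i. \<Sum>t\<in>S. g t i) = (\<lambda>j. \<Sum>t\<in>S. f (g t) j)" and ga: "g a \<in> fsupp_on I"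
    by auto
  show ?case
    using fsupp_add[OF ga IH(1)] lin_add[OF f ga IH(1)] IH(2) insert.hyps by simp
qed

lemma lin_lc:
  assumes f: "lin_on I J f" and c: "finite {t. c t \<noteq> 0}"
    and w: "\<And>t. c t \<noteq> 0 \<Longrightarrow> w t \<in> fsupp_on I"
  shows "f (lc c w) = lc c (\<lambda>t. f (w t))"
proof -
  have "f (lc c w) = (\<lambda>j. \<Sum>t\<in>{t. c t \<noteq> 0}. f (\<lambda>i. c t * w t i) j)"
    unfolding lc_def using lin_sum[OF f c, of "\<lambda>t i. c t * w t i"] w fsupp_smul by blast
  also have "\<dots> = lc c (\<lambda>t. f (w t))"
    unfolding lc_def using lin_smul[OF f w] by simp
  finally show ?thesis .
qed

lemma lin_on_lc:
  fixes w :: "'t \<Rightarrow> 'k \<Rightarrow> 'a::ring_1"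
  assumes "\<And>t. t \<in> T \<Longrightarrow> w t \<in> fsupp_on K"
  shows "lin_on T K (\<lambda>c. lc c w)"
  unfolding lin_on_def
proof (intro conjI ballI allI)
  fix c :: "'t \<Rightarrow> 'a" assume "c \<in> fsupp_on T"
  then show "lc c w \<in> fsupp_on K" using assms by (rule lc_fsupp)
next
  fix c d :: "'t \<Rightarrow> 'a" assume "c \<in> fsupp_on T" "d \<in> fsupp_on T"
  then show "lc (\<lambda>t. c t + d t) w = (\<lambda>k. lc c w k + lc d w k)" by (intro lc_add fsupp_finite)
next
  fix r and c :: "'t \<Rightarrow> 'a" assume "c \<in> fsupp_on T"
  then show "lc (\<lambda>t. r * c t) w = (\<lambda>k. r * lc c w k)" by (intro lc_smul fsupp_finite)
qed

definition submod :: "'k set \<Rightarrow> ('k \<Rightarrow> 'a::ring_1) set \<Rightarrow> bool" where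
  "submod K U \<longleftrightarrow> U \<subseteq> fsupp_on K \<and> (\<forall>u\<in>U. \<forall>v\<in>U. (\<lambda>k. u k + v k) \<in> U)
     \<and> (\<forall>r. \<forall>u\<in>U. (\<lambda>k. r * u k) \<in> U)"

lemma submod_fsupp: "submod K U \<Longrightarrow> u \<in> U \<Longrightarrow> u \<in> fsupp_on K"
  by (auto simp: submod_def)

lemma submod_fsupp_on: "submod K (fsupp_on K)"
  by (simp add: submod_def fsupp_add fsupp_smul)

lemma submod_add: "submod K U \<Longrightarrow> u \<in> U \<Longrightarrow> v \<in> U \<Longrightarrow> (\<lambda>k. u k + v k) \<in> U"
  by (simp add: submod_def)

lemma submod_smul: "submod K U \<Longrightarrow> u \<in> U \<Longrightarrow> (\<lambda>k. r * u k) \<in> U"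
  by (simp add: submod_def)

lemma submod_diff:
  assumes U: "submod K U" and "u \<in> U" "v \<in> U"
  shows "(\<lambda>k. u k - r * v k) \<in> U"
  using submod_add[OF U \<open>u \<in> U\<close> submod_smul[OF U \<open>v \<in> U\<close>, of "- r"]] by simp

lemma submod_image:
  assumes f: "lin_on I J f"
  shows "submod J (f ` fsupp_on I)"
  unfolding submod_def
proof (intro conjI ballI allI)
  fix u v assume "u \<in> f ` fsupp_on I" "v \<in> f ` fsupp_on I"
  then obtain a b where a: "a \<in> fsupp_on I" and b: "b \<in> fsupp_on I" and "u = f a" "v = f b"
    by blast
  then have "(\<lambda>k. u k + v k) = f (\<lambda>i. a i + b i)" by (simp add: lin_add[OF f a b])
  then show "(\<lambda>k. u k + v k) \<in> f ` fsupp_on I" by (rule image_eqI[OF _ fsupp_add[OF a b]])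
next
  fix r u assume "u \<in> f ` fsupp_on I"
  then obtain a where a: "a \<in> fsupp_on I" and "u = f a" by blast
  then have "(\<lambda>k. r * u k) = f (\<lambda>i. r * a i)" by (simp add: lin_smul[OF f a])
  then show "(\<lambda>k. r * u k) \<in> f ` fsupp_on I" by (rule image_eqI[OF _ fsupp_smul[OF a]])
next
  show "f ` fsupp_on I \<subseteq> fsupp_on J" using lin_in[OF f] by (rule image_subsetI)
qed

lemma submod_kernel:
  assumes f: "lin_on I J f"
  shows "submod I {k \<in> fsupp_on I. f k = (\<lambda>j. 0)}"
  unfolding submod_def
proof (intro conjI ballI allI)
  fix u v assume "u \<in> {k \<in> fsupp_on I. f k = (\<lambda>j. 0)}" "v \<in> {k \<in> fsupp_on I. f k = (\<lambda>j. 0)}"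
  then show "(\<lambda>i. u i + v i) \<in> {k \<in> fsupp_on I. f k = (\<lambda>j. 0)}"
    using lin_add[OF f, of u v] fsupp_add[of u I v] by simp
next
  fix r u assume "u \<in> {k \<in> fsupp_on I. f k = (\<lambda>j. 0)}"
  then show "(\<lambda>i. r * u i) \<in> {k \<in> fsupp_on I. f k = (\<lambda>j. 0)}"
    using lin_smul[OF f, of u r] fsupp_smul[of u I r] by simp
qed (rule Collect_subset)

lemma lin_iso_inv:
  fixes g :: "('t \<Rightarrow> 'a::ring_1) \<Rightarrow> ('k \<Rightarrow> 'a)"
  assumes g: "lin_on T K g" and bij: "bij_betw g (fsupp_on T) (fsupp_on K)"
  shows "lin_iso K T (inv_into (fsupp_on T) g)"
proof -
  define h where "h = inv_into (fsupp_on T) g"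
  have bh: "bij_betw h (fsupp_on K) (fsupp_on T)"
    unfolding h_def by (rule bij_betw_inv_into[OF bij])
  have hin: "h v \<in> fsupp_on T" if "v \<in> fsupp_on K" for v
    using bij_betw_apply[OF bh that] .
  have gh: "g (h v) = v" if "v \<in> fsupp_on K" for v
    using bij that unfolding h_def by (simp add: bij_betw_def f_inv_into_f)
  have hg: "h (g c) = c" if "c \<in> fsupp_on T" for c
    using bij that unfolding h_def by (simp add: bij_betw_def)
  have "lin_on K T h"
    unfolding lin_on_def
  proof (intro conjI ballI allI)
    fix u v :: "'k \<Rightarrow> 'a" assume u: "u \<in> fsupp_on K" and v: "v \<in> fsupp_on K"
    have "g (\<lambda>t. h u t + h v t) = (\<lambda>k. u k + v k)"
      using lin_add[OF g hin[OF u] hin[OF v]] by (simp add: gh u v)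
    then show "h (\<lambda>k. u k + v k) = (\<lambda>t. h u t + h v t)"
      using hg fsupp_add[OF hin[OF u] hin[OF v]] by metis
  next
    fix r and v :: "'k \<Rightarrow> 'a" assume v: "v \<in> fsupp_on K"
    have "g (\<lambda>t. r * h v t) = (\<lambda>k. r * v k)"
      using lin_smul[OF g hin[OF v]] by (simp add: gh v)
    then show "h (\<lambda>k. r * v k) = (\<lambda>t. r * h v t)"
      using hg fsupp_smul[OF hin[OF v]] by metis
  qed (rule hin)
  then show ?thesis using bh by (simp add: lin_iso_def h_def)
qed


section \<open>Local rings whose maximal ideal is principal with square zero\<close>

locale sqzero_local =
  fixes m :: "'a::ring_1 set" and x :: 'a
  assumes units: "a \<notin> m \<Longrightarrow> \<exists>b. b * a = 1 \<and> a * b = 1"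
    and msq: "a \<in> m \<Longrightarrow> b \<in> m \<Longrightarrow> a * b = 0"
    and x_nz: "x \<noteq> 0"
    and m_left: "m = {r * x | r. True}"
    and m_right: "m = {x * r | r. True}"
begin

lemma in_m_left: "a \<in> m \<longleftrightarrow> (\<exists>r. a = r * x)"
  using m_left by blast

lemma in_m_right: "a \<in> m \<longleftrightarrow> (\<exists>r. a = x * r)"
  using m_right by blast

lemma m0: "0 \<in> m"
  unfolding in_m_left by (rule exI[of _ 0]) simp

lemma x_in_m: "x \<in> m"
  unfolding in_m_left by (rule exI[of _ 1]) simp

lemma madd:
  assumes "a \<in> m" "b \<in> m"
  shows "a + b \<in> m"
proof -
  from assms obtain r s where "a = r * x" "b = s * x" unfolding in_m_left by blast
  then have "a + b = (r + s) * x" by (simp add: distrib_right)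
  then show ?thesis unfolding in_m_left by blast
qed

lemma mdiff:
  assumes "a \<in> m" "b \<in> m"
  shows "a - b \<in> m"
proof -
  from assms obtain r s where "a = r * x" "b = s * x" unfolding in_m_left by blast
  then have "a - b = (r - s) * x" by (simp add: left_diff_distrib)
  then show ?thesis unfolding in_m_left by blast
qed

lemma mleft:
  assumes "a \<in> m"
  shows "r * a \<in> m"
proof -
  from assms obtain s where "a = s * x" unfolding in_m_left by blast
  then have "r * a = (r * s) * x" by (simp add: mult.assoc)
  then show ?thesis unfolding in_m_left by blast
qed

lemma mright:
  assumes "a \<in> m"
  shows "a * r \<in> m"
proof -
  from assms obtain s where "a = x * s" unfolding in_m_right by blast
  then have "a * r = x * (s * r)" by (simp add: mult.assoc)
  then show ?thesis unfolding in_m_right by blast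
qed

lemma mcancel: "a + b \<in> m \<Longrightarrow> b \<in> m \<Longrightarrow> a \<in> m"
  using mdiff[of "a + b" b] by simp

lemma msum: "finite S \<Longrightarrow> (\<And>t. t \<in> S \<Longrightarrow> g t \<in> m) \<Longrightarrow> sum g S \<in> m"
  by (induction S rule: finite_induct) (simp_all add: m0 madd)

lemma one_notin_m: "1 \<notin> m"
  using msq[of 1 1] by auto

lemma unit_mult: "a \<notin> m \<Longrightarrow> b \<notin> m \<Longrightarrow> a * b \<notin> m"
proof
  assume a: "a \<notin> m" and b: "b \<notin> m" and ab: "a * b \<in> m"
  obtain b' where "b * b' = 1" using units[OF b] by blast
  then have "a = a * b * b'" by (simp add: mult.assoc)
  then show False using mright[OF ab, of b'] a by simp
qed

lemma x_kills_m: "a \<in> m \<Longrightarrow> x * a = 0" "a \<in> m \<Longrightarrow> a * x = 0"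
  using msq x_in_m by auto

lemma ann_right: "x * a = 0 \<Longrightarrow> a \<in> m"
proof (rule ccontr)
  assume xa: "x * a = 0" and a: "a \<notin> m"
  obtain b where "a * b = 1" using units[OF a] by blast
  then have "x = x * a * b" by (simp add: mult.assoc)
  then show False using xa x_nz by simp
qed

lemma ann_left: "a * x = 0 \<Longrightarrow> a \<in> m"
proof (rule ccontr)
  assume ax: "a * x = 0" and a: "a \<notin> m"
  obtain b where "b * a = 1" using units[OF a] by blast
  then have "x = b * (a * x)" by (simp add: mult.assoc[symmetric])
  then show False using ax x_nz by simp
qed

definition ldiv :: "'a \<Rightarrow> 'a" where
  "ldiv a = (if a = 0 then 0 else SOME r. a = x * r)"

definition rdiv :: "'a \<Rightarrow> 'a" where
  "rdiv a = (if a = 0 then 0 else SOME r. a = r * x)"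

lemma ldiv_0 [simp]: "ldiv 0 = 0" and rdiv_0 [simp]: "rdiv 0 = 0"
  by (simp_all add: ldiv_def rdiv_def)

lemma ldiv:
  assumes "a \<in> m"
  shows "a = x * ldiv a"
proof -
  have "\<exists>r. a = x * r" using assms by (simp add: in_m_right)
  then have "a = x * (SOME r. a = x * r)" by (rule someI_ex)
  then show ?thesis by (simp add: ldiv_def)
qed

lemma rdiv:
  assumes "a \<in> m"
  shows "a = rdiv a * x"
proof -
  have "\<exists>r. a = r * x" using assms by (simp add: in_m_left)
  then have "a = (SOME r. a = r * x) * x" by (rule someI_ex)
  then show ?thesis by (simp add: rdiv_def)
qed


definition mvec :: "('k \<Rightarrow> 'a) \<Rightarrow> bool" where
  "mvec v \<longleftrightarrow> (\<forall>k. v k \<in> m)"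

lemma mvec_zero: "mvec (\<lambda>k. 0)"
  by (simp add: mvec_def m0)

lemma mvec_diff: "mvec u \<Longrightarrow> mvec v \<Longrightarrow> mvec (\<lambda>k. u k - v k)"
  by (simp add: mvec_def mdiff)

lemma mvec_x: "mvec (\<lambda>k. x * v k)"
  by (simp add: mvec_def mright x_in_m)

lemma mvec_ldiv: "mvec v \<Longrightarrow> v = (\<lambda>k. x * ldiv (v k))"
  using ldiv by (auto simp: mvec_def)

lemma mvec_kill: "mvec v \<Longrightarrow> (\<lambda>k. x * v k) = (\<lambda>k. 0)"
  using x_kills_m by (auto simp: mvec_def)

lemma mvec_cancel_x: "(\<lambda>k. x * u k) = (\<lambda>k. x * v k) \<Longrightarrow> mvec (\<lambda>k. u k - v k)"
  unfolding mvec_def by (metis ann_right right_diff_distrib right_minus_eq)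

lemma mvec_lc: "finite {t. c t \<noteq> 0} \<Longrightarrow> (\<And>t. c t \<in> m) \<Longrightarrow> mvec (lc c w)"
  unfolding mvec_def lc_def by (simp add: msum mright)

text \<open>Homomorphisms of free modules preserve vectors with coordinates in \<open>m\<close>, as these are
  the multiples \<open>x v\<close>.\<close>
lemma lin_mvec:
  assumes f: "lin_on I J f" and v: "v \<in> fsupp_on I" and mv: "mvec v"
  shows "mvec (f v)"
proof -
  have "f v = f (\<lambda>i. x * ldiv (v i))" using mvec_ldiv[OF mv] by simp
  also have "\<dots> = (\<lambda>j. x * f (\<lambda>i. ldiv (v i)) j)"
    by (rule lin_smul[OF f fsupp_map[where g = ldiv, OF ldiv_0 v]])
  finally show ?thesis by (simp add: mvec_x)
qed


subsection \<open>Leading indices\<close>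

definition islead :: "('k \<Rightarrow> 'k \<Rightarrow> bool) \<Rightarrow> ('k \<Rightarrow> 'a) \<Rightarrow> 'k \<Rightarrow> bool" where
  "islead lt v l \<longleftrightarrow> v l \<notin> m \<and> (\<forall>k. lt l k \<longrightarrow> v k \<in> m)"

lemma islead_not_mvec: "islead lt v l \<Longrightarrow> \<not> mvec v"
  by (auto simp: islead_def mvec_def)

lemma islead_in:
  assumes "v \<in> fsupp_on K" and "islead lt v l"
  shows "l \<in> K"
proof (rule ccontr)
  assume "l \<notin> K"
  then have "v l = 0" by (rule fsupp_out[OF assms(1)])
  then show False using assms(2) m0 by (simp add: islead_def)
qed

lemma islead_cong:
  assumes "mvec (\<lambda>k. u k - v k)"
  shows "islead lt u l \<longleftrightarrow> islead lt v l"
proof -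
  have "u k \<in> m \<longleftrightarrow> v k \<in> m" for k
  proof -
    have d: "u k - v k \<in> m" using assms by (simp add: mvec_def)
    have "u k = (u k - v k) + v k" "v k = u k - (u k - v k)" by simp_all
    then show ?thesis using madd[OF d] mdiff[OF _ d] by metis
  qed
  then show ?thesis by (simp add: islead_def)
qed

lemma islead_exists:
  assumes wo: "strict_wo lt" and v: "v \<in> fsupp_on K" and nm: "\<not> mvec v"
  obtains l where "islead lt v l"
proof -
  have "{k. v k \<notin> m} \<subseteq> {k. v k \<noteq> 0}" using m0 by auto
  then have fin: "finite {k. v k \<notin> m}" using fsupp_finite[OF v] by (rule finite_subset)
  have "{k. v k \<notin> m} \<noteq> {}" using nm by (auto simp: mvec_def)
  then obtain l where l: "v l \<notin> m" and max: "\<forall>k. v k \<notin> m \<longrightarrow> k \<noteq> l \<longrightarrow> lt k l"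
    using strict_wo_finite_max[OF wo fin] by blast
  have "v k \<in> m" if "lt l k" for k
    using max that strict_wo_irrefl[OF wo] strict_wo_trans[OF wo] by blast
  then show ?thesis using l that by (auto simp: islead_def)
qed

lemma islead_below:
  assumes wo: "strict_wo lt" and v: "v \<in> fsupp_on K" and nm: "\<not> mvec v"
    and high: "\<And>k. k = l \<or> lt l k \<Longrightarrow> v k \<in> m"
  obtains l' where "islead lt v l'" and "lt l' l"
proof -
  obtain l' where l': "islead lt v l'" using islead_exists[OF wo v nm] .
  have "l' \<noteq> l" and "\<not> lt l l'" using l' high by (auto simp: islead_def)
  then have "lt l' l" using strict_wo_total[OF wo] by blast
  then show ?thesis using l' that by blast
qed

lemma islead_eliminate:
  assumes u: "islead lt u l" and w: "islead lt w l"
  obtains r where "u l - r * w l = 0" and "\<And>k. lt l k \<Longrightarrow> u k - r * w k \<in> m"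
proof -
  obtain b where b: "b * w l = 1" using units w by (auto simp: islead_def)
  have "u l - (u l * b) * w l = 0" by (simp add: mult.assoc b)
  moreover have "u k - (u l * b) * w k \<in> m" if "lt l k" for k
    using u w that by (simp add: islead_def mdiff mleft)
  ultimately show ?thesis using that by blast
qed

lemma islead_unit_vector:
  assumes "strict_wo lt"
  shows "islead lt (\<lambda>j. if j = d then 1 else 0) d"
  using strict_wo_irrefl[OF assms] one_notin_m m0 by (auto simp: islead_def)


subsection \<open>Echelon families\<close>

definition echelon :: "('k \<Rightarrow> 'k \<Rightarrow> bool) \<Rightarrow> 't set \<Rightarrow> ('t \<Rightarrow> 'k \<Rightarrow> 'a) \<Rightarrow> ('t \<Rightarrow> 'k) \<Rightarrow> bool"
  where "echelon lt T w lam \<longleftrightarrow> inj_on lam T \<and> (\<forall>t\<in>T. islead lt (w t) (lam t))"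

lemma echelon_mono: "echelon lt T w lam \<Longrightarrow> T' \<subseteq> T \<Longrightarrow> echelon lt T' w lam"
  unfolding echelon_def by (meson inj_on_subset subsetD)

text \<open>A combination of an echelon family with some unit coefficient has as leading index the
  largest leading index among the members with unit coefficients.\<close>
lemma echelon_lead:
  assumes wo: "strict_wo lt" and ech: "echelon lt T w lam"
    and c: "c \<in> fsupp_on T" and nz: "c t1 \<notin> m"
  obtains t where "t \<in> T" "c t \<notin> m" "islead lt (lc c w) (lam t)"
proof -
  define P where "P = {t. c t \<noteq> 0}"
  define S where "S = {t \<in> P. c t \<notin> m}"
  have fP: "finite P" using fsupp_finite[OF c] by (simp add: P_def)
  have ST: "S \<subseteq> T" using fsupp_sub[OF c] by (auto simp: S_def P_def)
  have "lam t1 \<in> lam ` S" using nz m0 by (auto simp: S_def P_def)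
  then obtain l where "l \<in> lam ` S" and lmax: "\<forall>l'\<in>lam ` S. l' \<noteq> l \<longrightarrow> lt l' l"
    using strict_wo_finite_max[OF wo, of "lam ` S"] fP by (auto simp: S_def)
  then obtain t0 where t0: "t0 \<in> S" "lam t0 = l" by blast
  have lead: "islead lt (w t) (lam t)" if "t \<in> S" for t
    using ech ST that by (auto simp: echelon_def)
  have below: "lt (lam t) l" if "t \<in> S" "t \<noteq> t0" for t
    using lmax that t0 ech ST inj_onD by (fastforce simp: echelon_def)
  text \<open>At and above \<open>l\<close>, only the term of \<open>t0\<close> can leave \<open>m\<close>.\<close>
  have rest: "(\<Sum>t\<in>P - {t0}. c t * w t k) \<in> m" if k: "k = l \<or> lt l k" for k
  proof (rule msum)
    fix t assume t: "t \<in> P - {t0}"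
    show "c t * w t k \<in> m"
    proof (cases "c t \<in> m")
      case True
      then show ?thesis by (rule mright)
    next
      case False
      then have "t \<in> S" using t by (simp add: S_def)
      then have "lt (lam t) k" using below t k strict_wo_trans[OF wo] by blast
      then show ?thesis using lead[OF \<open>t \<in> S\<close>] by (simp add: islead_def mleft)
    qed
  qed (use fP in simp)
  have split: "lc c w k = c t0 * w t0 k + (\<Sum>t\<in>P - {t0}. c t * w t k)" for k
    using lc_sum[OF fP, of c w k] sum.remove[OF fP, of t0] t0(1) by (simp add: P_def S_def)
  have "c t0 * w t0 l \<notin> m"
    using unit_mult t0 lead[OF t0(1)] by (simp add: S_def islead_def)
  then have "lc c w l \<notin> m"
    using mcancel[OF _ rest[of l]] unfolding split[of l] by blast
  moreover have "lc c w k \<in> m" if "lt l k" for k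
    using split[of k] rest[of k] lead[OF t0(1)] that t0(2) by (simp add: islead_def madd mleft)
  ultimately show ?thesis using that t0 ST by (auto simp: islead_def S_def)
qed

lemma echelon_indep:
  assumes wo: "strict_wo lt" and ech: "echelon lt T w lam"
    and c: "c \<in> fsupp_on T" and mc: "mvec (lc c w)"
  shows "c t \<in> m"
proof (rule ccontr)
  assume "c t \<notin> m"
  then obtain t' where "islead lt (lc c w) (lam t')" using echelon_lead[OF wo ech c] by blast
  then have "\<not> mvec (lc c w)" by (rule islead_not_mvec)
  then show False using mc by contradiction
qed

text \<open>An echelon family in a submodule \<open>U\<close> realising every leading index of \<open>U\<close> spans \<open>U\<close>
  modulo \<open>m\<close>: Gaussian elimination by well-founded induction on the leading index.\<close>
lemma echelon_span_lead:
  assumes wo: "strict_wo lt" and U: "submod K U"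
    and ech: "echelon lt T w lam" and wU: "\<And>t. t \<in> T \<Longrightarrow> w t \<in> U"
    and cover: "\<And>u l. u \<in> U \<Longrightarrow> islead lt u l \<Longrightarrow> l \<in> lam ` T"
  shows "u \<in> U \<Longrightarrow> islead lt u l \<Longrightarrow> \<exists>c\<in>fsupp_on T. mvec (\<lambda>k. u k - lc c w k)"
  using strict_wo_wf[OF wo]
proof (induction l arbitrary: u rule: wfp_induct_rule)
  case (less l)
  obtain t where t: "t \<in> T" "lam t = l" using cover[OF less.prems] by blast
  have wt: "islead lt (w t) l" using ech t by (auto simp: echelon_def)
  obtain r where r0: "u l - r * w t l = 0" and rhigh: "\<And>k. lt l k \<Longrightarrow> u k - r * w t k \<in> m"
    using islead_eliminate[OF less.prems(2) wt] by blast
  define u' where "u' = (\<lambda>k. u k - r * w t k)"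
  have u'U: "u' \<in> U" unfolding u'_def by (rule submod_diff[OF U less.prems(1) wU[OF t(1)]])
  have "\<exists>c\<in>fsupp_on T. mvec (\<lambda>k. u' k - lc c w k)"
  proof (cases "mvec u'")
    case True
    then show ?thesis by (intro bexI[OF _ fsupp_zero]) (simp add: lc_zero)
  next
    case False
    have "u' k \<in> m" if "k = l \<or> lt l k" for k
      using that r0 rhigh m0 by (auto simp: u'_def)
    then obtain l' where "islead lt u' l'" "lt l' l"
      using islead_below[OF wo submod_fsupp[OF U u'U] False] by blast
    then show ?thesis using less.IH u'U by blast
  qed
  then obtain c where c: "c \<in> fsupp_on T" and mc: "mvec (\<lambda>k. u' k - lc c w k)" by blast
  define c' where "c' = (\<lambda>s. c s + (if s = t then r else 0))"
  have c': "c' \<in> fsupp_on T" unfolding c'_def by (rule fsupp_add[OF c fsupp_single[OF t(1)]])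
  have "lc c' w = (\<lambda>k. lc c w k + r * w t k)"
    unfolding c'_def using lc_add[OF fsupp_finite[OF c] fsupp_finite[OF fsupp_single[OF t(1)]]]
    by (simp add: lc_single)
  then have "(\<lambda>k. u k - lc c' w k) = (\<lambda>k. u' k - lc c w k)"
    by (simp add: u'_def algebra_simps)
  then show ?case using c' mc by metis
qed

lemma echelon_span:
  assumes wo: "strict_wo lt" and U: "submod K U"
    and ech: "echelon lt T w lam" and wU: "\<And>t. t \<in> T \<Longrightarrow> w t \<in> U"
    and cover: "\<And>u l. u \<in> U \<Longrightarrow> islead lt u l \<Longrightarrow> l \<in> lam ` T"
    and u: "u \<in> U"
  shows "\<exists>c\<in>fsupp_on T. mvec (\<lambda>k. u k - lc c w k)"
proof (cases "mvec u")
  case True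
  then show ?thesis by (intro bexI[OF _ fsupp_zero]) (simp add: lc_zero)
next
  case False
  then obtain l where "islead lt u l" using islead_exists[OF wo submod_fsupp[OF U u]] by blast
  have "\<And>u. u \<in> U \<Longrightarrow> islead lt u l \<Longrightarrow> \<exists>c\<in>fsupp_on T. mvec (\<lambda>k. u k - lc c w k)"
    by (rule echelon_span_lead[OF wo U ech wU cover])
  with u \<open>islead lt u l\<close> show ?thesis by blast
qed


subsection \<open>Bases detected modulo \<open>m\<close>\<close>

text \<open>A version of Nakayama's lemma: a family in \<open>R^(K)\<close> that is independent and spanning
  modulo \<open>m\<close> is a basis, because \<open>m = xR\<close> and \<open>x m = 0\<close>.\<close>

lemma lc_inj_mod_m:
  assumes w: "\<And>t. t \<in> T \<Longrightarrow> w t \<in> fsupp_on K"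
    and indep: "\<And>c. c \<in> fsupp_on T \<Longrightarrow> mvec (lc c w) \<Longrightarrow> \<forall>t. c t \<in> m"
  shows "inj_on (\<lambda>c. lc c w) (fsupp_on T)"
proof -
  have kernel: "c = (\<lambda>t. 0)" if c: "c \<in> fsupp_on T" and z: "lc c w = (\<lambda>k. 0)" for c
  proof -
    have "\<forall>t. c t \<in> m" using indep[OF c] z mvec_zero by simp
    then have "mvec c" by (simp add: mvec_def)
    define s where "s = (\<lambda>t. ldiv (c t))"
    have s: "s \<in> fsupp_on T" unfolding s_def by (rule fsupp_map[where g = ldiv, OF ldiv_0 c])
    have cs: "c = (\<lambda>t. x * s t)" unfolding s_def by (rule mvec_ldiv[OF \<open>mvec c\<close>])
    have "(\<lambda>k. x * lc s w k) = (\<lambda>k. x * 0)"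
      using z lc_smul[OF fsupp_finite[OF s], of x w] cs by simp
    then have "mvec (lc s w)" using mvec_cancel_x by fastforce
    then have "\<forall>t. s t \<in> m" using indep[OF s] by blast
    then show ?thesis using cs x_kills_m by auto
  qed
  show ?thesis
  proof (rule inj_onI)
    fix c d assume c: "c \<in> fsupp_on T" and d: "d \<in> fsupp_on T" and e: "lc c w = lc d w"
    have "lc (\<lambda>t. c t - d t) w = (\<lambda>k. 0)"
      using lc_diff[OF fsupp_finite[OF c] fsupp_finite[OF d], of w] e by simp
    then have "(\<lambda>t. c t - d t) = (\<lambda>t. 0)" by (rule kernel[OF fsupp_diff[OF c d]])
    then show "c = d" by (simp add: fun_eq_iff)
  qed
qed

lemma lc_surj_mod_m:
  assumes w: "\<And>t. t \<in> T \<Longrightarrow> w t \<in> fsupp_on K"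
    and span: "\<And>v. v \<in> fsupp_on K \<Longrightarrow> \<exists>c\<in>fsupp_on T. mvec (\<lambda>k. v k - lc c w k)"
    and v: "v \<in> fsupp_on K"
  shows "v \<in> (\<lambda>c. lc c w) ` fsupp_on T"
proof -
  obtain c1 where c1: "c1 \<in> fsupp_on T" and mr: "mvec (\<lambda>k. v k - lc c1 w k)"
    using span[OF v] by blast
  define q where "q = (\<lambda>k. ldiv (v k - lc c1 w k))"
  have q: "q \<in> fsupp_on K"
    unfolding q_def by (rule fsupp_map[where g = ldiv, OF ldiv_0 fsupp_diff[OF v lc_fsupp[OF c1 w]]])
  have vq: "(\<lambda>k. v k - lc c1 w k) = (\<lambda>k. x * q k)" unfolding q_def by (rule mvec_ldiv[OF mr])
  obtain c2 where c2: "c2 \<in> fsupp_on T" and mq: "mvec (\<lambda>k. q k - lc c2 w k)"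
    using span[OF q] by blast
  have xq: "x * q k = x * lc c2 w k" for k
    using mvec_kill[OF mq] by (simp add: fun_eq_iff right_diff_distrib)
  define c where "c = (\<lambda>t. c1 t + x * c2 t)"
  have "lc c w = (\<lambda>k. lc c1 w k + x * lc c2 w k)"
    unfolding c_def using lc_add[OF fsupp_finite[OF c1] fsupp_finite[OF fsupp_smul[OF c2, of x]], of w]
      lc_smul[OF fsupp_finite[OF c2], of x w] by simp
  also have "\<dots> = v" using vq xq by (simp add: fun_eq_iff algebra_simps)
  finally show ?thesis using fsupp_add[OF c1 fsupp_smul[OF c2]] unfolding c_def by blast
qed

lemma lc_basis:
  assumes w: "\<And>t. t \<in> T \<Longrightarrow> w t \<in> fsupp_on K"
    and indep: "\<And>c. c \<in> fsupp_on T \<Longrightarrow> mvec (lc c w) \<Longrightarrow> \<forall>t. c t \<in> m"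
    and span: "\<And>v. v \<in> fsupp_on K \<Longrightarrow> \<exists>c\<in>fsupp_on T. mvec (\<lambda>k. v k - lc c w k)"
  shows "bij_betw (\<lambda>c. lc c w) (fsupp_on T) (fsupp_on K)"
  unfolding bij_betw_def
proof
  show "inj_on (\<lambda>c. lc c w) (fsupp_on T)" by (rule lc_inj_mod_m[OF w indep])
  show "(\<lambda>c. lc c w) ` fsupp_on T = fsupp_on K"
  proof
    show "(\<lambda>c. lc c w) ` fsupp_on T \<subseteq> fsupp_on K" by (auto intro: lc_fsupp w)
    show "fsupp_on K \<subseteq> (\<lambda>c. lc c w) ` fsupp_on T"
      using lc_surj_mod_m[of T w K, OF w span] by blast
  qed
qed

end


section \<open>The normal form of a homomorphism of free modules\<close>

text \<open>Both normal-form bases are indexed by the type below; its three summands carry the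
  components \<open>M\<close>, \<open>N\<close> and \<open>V\<close> (resp. \<open>W\<close>) of the decomposition.\<close>
type_synonym ('i, 'j) idx = "('i + 'j) + (('i + 'j) + ('i + 'j))"

lemma idx_cases:
  obtains (M) s where "t = Inl s" | (N) s where "t = Inr (Inl s)" | (V) s where "t = Inr (Inr s)"
  by (metis sumE)

lemma diag_map_simps [simp]:
  "diag_map x u (Inl s) = u (Inl s)" "diag_map x u (Inr (Inl s)) = u (Inr (Inl s)) * x"
  "diag_map x u (Inr (Inr s)) = 0"
  by (simp_all add: diag_map_def)

text \<open>The normal form is read off from three submodules: the image of \<open>f\<close>, the module \<open>xpre\<close> of
  vectors \<open>y\<close> with \<open>xy\<close> in the image, and the kernel of \<open>f\<close>.\<close>
locale normal_form = sqzero_local m x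
  for m :: "'a::ring_1 set" and x :: 'a +
  fixes I :: "'i set" and J :: "'j set" and f :: "('i \<Rightarrow> 'a) \<Rightarrow> ('j \<Rightarrow> 'a)"
    and ltI :: "'i \<Rightarrow> 'i \<Rightarrow> bool" and ltJ :: "'j \<Rightarrow> 'j \<Rightarrow> bool"
  assumes f: "lin_on I J f" and woI: "strict_wo ltI" and woJ: "strict_wo ltJ"
begin

definition xpre :: "('j \<Rightarrow> 'a) set" where
  "xpre = {y \<in> fsupp_on J. (\<lambda>j. x * y j) \<in> f ` fsupp_on I}"

definition ker :: "('i \<Rightarrow> 'a) set" where
  "ker = {k \<in> fsupp_on I. f k = (\<lambda>j. 0)}"

definition A0 :: "'j set" where "A0 = {j. \<exists>v\<in>fsupp_on I. islead ltJ (f v) j}"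
definition B0 :: "'j set" where "B0 = {j. \<exists>y\<in>xpre. islead ltJ y j} - A0"
definition D0 :: "'j set" where "D0 = J - A0 - B0"
definition C0 :: "'i set" where "C0 = {i. \<exists>k\<in>ker. islead ltI k i}"

definition vA :: "'j \<Rightarrow> 'i \<Rightarrow> 'a" where
  "vA a = (SOME v. v \<in> fsupp_on I \<and> islead ltJ (f v) a)"
definition gB :: "'j \<Rightarrow> 'j \<Rightarrow> 'a" where
  "gB b = (SOME y. y \<in> xpre \<and> islead ltJ y b)"
definition uB :: "'j \<Rightarrow> 'i \<Rightarrow> 'a" where
  "uB b = (SOME u. u \<in> fsupp_on I \<and> f u = (\<lambda>j. x * gB b j))"
definition kC :: "'i \<Rightarrow> 'i \<Rightarrow> 'a" where
  "kC i = (SOME k. k \<in> ker \<and> islead ltI k i)"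

text \<open>Positions of the basis vectors: \<open>TA\<close>, \<open>TB\<close>, \<open>TC\<close> index the basis of \<open>R^(I)\<close> and \<open>TA\<close>,
  \<open>TB\<close>, \<open>TD\<close> the basis of \<open>R^(J)\<close>.\<close>
definition TA :: "('i, 'j) idx set" where "TA = Inl ` Inr ` A0"
definition TB :: "('i, 'j) idx set" where "TB = Inr ` Inl ` Inr ` B0"
definition TC :: "('i, 'j) idx set" where "TC = Inr ` Inr ` Inl ` C0"
definition TD :: "('i, 'j) idx set" where "TD = Inr ` Inr ` Inr ` D0"

definition wF :: "('i, 'j) idx \<Rightarrow> 'i \<Rightarrow> 'a" where
  "wF t = (case t of Inl (Inr a) \<Rightarrow> vA a | Inr (Inl (Inr b)) \<Rightarrow> uB b
     | Inr (Inr (Inl i)) \<Rightarrow> kC i | _ \<Rightarrow> (\<lambda>_. 0))"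

definition wG :: "('i, 'j) idx \<Rightarrow> 'j \<Rightarrow> 'a" where
  "wG t = (case t of Inl (Inr a) \<Rightarrow> f (vA a) | Inr (Inl (Inr b)) \<Rightarrow> gB b
     | Inr (Inr (Inr d)) \<Rightarrow> (\<lambda>j. if j = d then 1 else 0) | _ \<Rightarrow> (\<lambda>_. 0))"

definition lamG :: "('i, 'j) idx \<Rightarrow> 'j" where
  "lamG t = (case t of Inl (Inr j) \<Rightarrow> j | Inr (Inl (Inr j)) \<Rightarrow> j | Inr (Inr (Inr j)) \<Rightarrow> j
     | _ \<Rightarrow> undefined)"

definition lamF :: "('i, 'j) idx \<Rightarrow> 'i" where
  "lamF t = (case t of Inr (Inr (Inl i)) \<Rightarrow> i | _ \<Rightarrow> undefined)"

lemma wF_simps [simp]: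
  "wF (Inl (Inr a)) = vA a" "wF (Inr (Inl (Inr b))) = uB b" "wF (Inr (Inr (Inl i))) = kC i"
  by (simp_all add: wF_def)

lemma wG_simps [simp]:
  "wG (Inl (Inr a)) = f (vA a)" "wG (Inr (Inl (Inr b))) = gB b"
  "wG (Inr (Inr (Inr d))) = (\<lambda>j. if j = d then 1 else 0)"
  by (simp_all add: wG_def)

lemma lam_simps [simp]:
  "lamG (Inl (Inr a)) = a" "lamG (Inr (Inl (Inr b))) = b" "lamG (Inr (Inr (Inr d))) = d"
  "lamF (Inr (Inr (Inl i))) = i"
  by (simp_all add: lamG_def lamF_def)


lemma idx_mem [simp]:
  "Inl p \<notin> TB" "Inl p \<notin> TC" "Inl p \<notin> TD" "Inr q \<notin> TA"
  "Inr (Inl p') \<notin> TC" "Inr (Inl p') \<notin> TD" "Inr (Inr q') \<notin> TB"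
  by (auto simp: TA_def TB_def TC_def TD_def)

lemma TF_cases:
  assumes "t \<in> TA \<union> TB \<union> TC"
  obtains (A) a where "a \<in> A0" "t = Inl (Inr a)" | (B) b where "b \<in> B0" "t = Inr (Inl (Inr b))"
    | (C) i where "i \<in> C0" "t = Inr (Inr (Inl i))"
  using assms unfolding TA_def TB_def TC_def by blast

lemma TG_cases:
  assumes "t \<in> TA \<union> TB \<union> TD"
  obtains (A) a where "a \<in> A0" "t = Inl (Inr a)" | (B) b where "b \<in> B0" "t = Inr (Inl (Inr b))"
    | (D) d where "d \<in> D0" "t = Inr (Inr (Inr d))"
  using assms unfolding TA_def TB_def TD_def by blast

lemma image_in_xpre:
  assumes v: "v \<in> fsupp_on I"
  shows "f v \<in> xpre"
proof -
  have "(\<lambda>j. x * f v j) = f (\<lambda>i. x * v i)" by (simp add: lin_smul[OF f v])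
  then have "(\<lambda>j. x * f v j) \<in> f ` fsupp_on I" by (rule image_eqI[OF _ fsupp_smul[OF v]])
  then show ?thesis using lin_in[OF f v] by (simp add: xpre_def)
qed

lemma xpre_submod: "submod J xpre"
  unfolding submod_def
proof (intro conjI ballI allI)
  show "xpre \<subseteq> fsupp_on J" unfolding xpre_def by (rule Collect_restrict)
next
  fix u v assume "u \<in> xpre" "v \<in> xpre"
  then obtain a b where u: "u \<in> fsupp_on J" and a: "a \<in> fsupp_on I" "(\<lambda>j. x * u j) = f a"
    and v: "v \<in> fsupp_on J" and b: "b \<in> fsupp_on I" "(\<lambda>j. x * v j) = f b"
    unfolding xpre_def by blast
  have "(\<lambda>j. x * (u j + v j)) = f (\<lambda>i. a i + b i)"
    by (simp add: lin_add[OF f a(1) b(1)] a(2)[symmetric] b(2)[symmetric] distrib_left)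
  then have "(\<lambda>j. x * (u j + v j)) \<in> f ` fsupp_on I" by (rule image_eqI[OF _ fsupp_add[OF a(1) b(1)]])
  then show "(\<lambda>j. u j + v j) \<in> xpre" using fsupp_add[OF u v] by (simp add: xpre_def)
next
  fix r u assume "u \<in> xpre"
  then obtain a where u: "u \<in> fsupp_on J" and a: "a \<in> fsupp_on I" "(\<lambda>j. x * u j) = f a"
    unfolding xpre_def by blast
  text \<open>Move the scalar past \<open>x\<close>, using \<open>xR = Rx\<close>.\<close>
  define r' where "r' = rdiv (x * r)"
  have "x * r = r' * x" unfolding r'_def by (rule rdiv) (simp add: mright x_in_m)
  then have "(\<lambda>j. x * (r * u j)) = (\<lambda>j. r' * (x * u j))" by (simp add: mult.assoc[symmetric])
  also have "\<dots> = f (\<lambda>i. r' * a i)" by (simp add: lin_smul[OF f a(1)] a(2)[symmetric])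
  finally have "(\<lambda>j. x * (r * u j)) \<in> f ` fsupp_on I" by (rule image_eqI[OF _ fsupp_smul[OF a(1)]])
  then show "(\<lambda>j. r * u j) \<in> xpre" using fsupp_smul[OF u] by (simp add: xpre_def)
qed

lemma ker_submod: "submod I ker"
  unfolding ker_def by (rule submod_kernel[OF f])

lemma vA_spec:
  assumes "a \<in> A0"
  shows "vA a \<in> fsupp_on I \<and> islead ltJ (f (vA a)) a"
proof -
  have "\<exists>v. v \<in> fsupp_on I \<and> islead ltJ (f v) a" using assms by (simp add: A0_def Bex_def)
  then show ?thesis unfolding vA_def by (rule someI_ex)
qed

lemma gB_spec:
  assumes "b \<in> B0"
  shows "gB b \<in> xpre \<and> islead ltJ (gB b) b"
proof -
  have "\<exists>y. y \<in> xpre \<and> islead ltJ y b" using assms by (simp add: B0_def Bex_def)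
  then show ?thesis unfolding gB_def by (rule someI_ex)
qed

lemma uB_spec:
  assumes "b \<in> B0"
  shows "uB b \<in> fsupp_on I \<and> f (uB b) = (\<lambda>j. x * gB b j)"
proof -
  have "(\<lambda>j. x * gB b j) \<in> f ` fsupp_on I" using gB_spec[OF assms] by (simp add: xpre_def)
  then have "\<exists>u. u \<in> fsupp_on I \<and> f u = (\<lambda>j. x * gB b j)" by (simp add: image_iff eq_commute Bex_def)
  then show ?thesis unfolding uB_def by (rule someI_ex)
qed

lemma kC_spec:
  assumes "i \<in> C0"
  shows "kC i \<in> ker \<and> islead ltI (kC i) i"
proof -
  have "\<exists>k. k \<in> ker \<and> islead ltI k i" using assms by (simp add: C0_def Bex_def)
  then show ?thesis unfolding kC_def by (rule someI_ex)
qed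

lemma B0_disj: "b \<in> B0 \<Longrightarrow> b \<notin> A0"
  by (simp add: B0_def)

lemma D0_disj: "d \<in> D0 \<Longrightarrow> d \<notin> A0 \<and> d \<notin> B0"
  by (simp add: D0_def)

lemma A0_sub: "A0 \<subseteq> J"
proof
  fix j assume "j \<in> A0"
  then obtain v where v: "v \<in> fsupp_on I" and l: "islead ltJ (f v) j" by (auto simp: A0_def)
  show "j \<in> J" by (rule islead_in[OF lin_in[OF f v] l])
qed

lemma B0_sub: "B0 \<subseteq> J"
proof
  fix j assume "j \<in> B0"
  then obtain y where y: "y \<in> xpre" and l: "islead ltJ y j" by (auto simp: B0_def)
  show "j \<in> J" by (rule islead_in[OF submod_fsupp[OF xpre_submod y] l])
qed

lemma C0_sub: "C0 \<subseteq> I"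
proof
  fix i assume "i \<in> C0"
  then obtain k where k: "k \<in> ker" and l: "islead ltI k i" by (auto simp: C0_def)
  show "i \<in> I" by (rule islead_in[OF submod_fsupp[OF ker_submod k] l])
qed

lemma wF_fsupp:
  assumes "t \<in> TA \<union> TB \<union> TC"
  shows "wF t \<in> fsupp_on I"
  using assms
proof (cases rule: TF_cases)
  case (A a)
  then show ?thesis using vA_spec by simp
next
  case (B b)
  then show ?thesis using uB_spec by simp
next
  case (C i)
  then show ?thesis using kC_spec by (simp add: ker_def)
qed

lemma wG_fsupp:
  assumes "t \<in> TA \<union> TB \<union> TD"
  shows "wG t \<in> fsupp_on J"
  using assms
proof (cases rule: TG_cases)
  case (A a)
  then show ?thesis using vA_spec lin_in[OF f] by simp
next
  case (B b)
  then show ?thesis using gB_spec submod_fsupp[OF xpre_submod] by simp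
next
  case (D d)
  then have "d \<in> J" by (simp add: D0_def)
  then show ?thesis using D fsupp_single[of d J 1] by simp
qed

lemma wG_echelon: "echelon ltJ (TA \<union> TB \<union> TD) wG lamG"
  unfolding echelon_def
proof
  text \<open>\<open>A0\<close>, \<open>B0\<close>, \<open>D0\<close> are disjoint, so the position is recovered from the leading index.\<close>
  define pos where "pos j = (if j \<in> A0 then Inl (Inr j) else if j \<in> B0 then Inr (Inl (Inr j))
    else Inr (Inr (Inr j)) :: ('i, 'j) idx)" for j
  show "inj_on lamG (TA \<union> TB \<union> TD)"
  proof (rule inj_on_inverseI)
    fix t assume "t \<in> TA \<union> TB \<union> TD"
    then show "pos (lamG t) = t" by (cases rule: TG_cases) (simp_all add: pos_def B0_disj D0_disj)
  qed
next
  show "\<forall>t\<in>TA \<union> TB \<union> TD. islead ltJ (wG t) (lamG t)"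
  proof
    fix t assume "t \<in> TA \<union> TB \<union> TD"
    then show "islead ltJ (wG t) (lamG t)"
      by (cases rule: TG_cases) (simp_all add: vA_spec gB_spec islead_unit_vector[OF woJ])
  qed
qed

lemma wF_echelon: "echelon ltI TC wF lamF"
  unfolding echelon_def
proof
  show "inj_on lamF TC" by (auto simp: inj_on_def TC_def)
  show "\<forall>t\<in>TC. islead ltI (wF t) (lamF t)" using kC_spec by (auto simp: TC_def)
qed


lemma lam_image: "lamG ` TA = A0" "lamG ` TB = B0" "lamG ` TD = D0" "lamF ` TC = C0"
  by (simp_all add: TA_def TB_def TC_def TD_def image_image)

lemma J_split: "J = A0 \<union> B0 \<union> D0"
  using A0_sub B0_sub by (auto simp: D0_def)


lemma diag_map_fsupp:
  assumes c: "c \<in> fsupp_on (TA \<union> TB \<union> TC)"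
  shows "diag_map x c \<in> fsupp_on (TA \<union> TB)"
proof (rule fsupp_I)
  fix t assume t: "t \<notin> TA \<union> TB"
  show "diag_map x c t = 0"
  proof (cases t rule: idx_cases)
    case (M s)
    then have "c t = 0" using t by (intro fsupp_out[OF c]) simp
    then show ?thesis using M by simp
  next
    case (N s)
    then have "c t = 0" using t by (intro fsupp_out[OF c]) simp
    then show ?thesis using N by simp
  qed simp
next
  have "{t. diag_map x c t \<noteq> 0} \<subseteq> {t. c t \<noteq> 0}"
  proof
    fix t assume "t \<in> {t. diag_map x c t \<noteq> 0}"
    then show "t \<in> {t. c t \<noteq> 0}" by (cases t rule: idx_cases) auto
  qed
  then show "finite {t. diag_map x c t \<noteq> 0}" using fsupp_finite[OF c] by (rule finite_subset)
qed

lemma f_lc_wF: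
  assumes c: "c \<in> fsupp_on (TA \<union> TB \<union> TC)"
  shows "f (lc c wF) = lc (diag_map x c) wG"
proof -
  have fin: "finite {t. c t \<noteq> 0}" by (rule fsupp_finite[OF c])
  have "f (lc c wF) = lc c (\<lambda>t. f (wF t))"
    by (rule lin_lc[OF f fin]) (rule wF_fsupp[OF fsupp_sub[OF c]])
  also have "\<dots> = lc (diag_map x c) wG"
  proof (rule lc_cong[OF fin subset_refl])
    show "{t. diag_map x c t \<noteq> 0} \<subseteq> {t. c t \<noteq> 0}"
    proof
      fix t assume "t \<in> {t. diag_map x c t \<noteq> 0}"
      then show "t \<in> {t. c t \<noteq> 0}" by (cases t rule: idx_cases) auto
    qed
  next
    fix t k assume "t \<in> {t. c t \<noteq> 0}"
    then have "t \<in> TA \<union> TB \<union> TC" using fsupp_sub[OF c] by simp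
    then show "c t * f (wF t) k = diag_map x c t * wG t k"
    proof (cases rule: TF_cases)
      case (B b)
      then show ?thesis using uB_spec[OF B(1)] by (simp add: mult.assoc)
    next
      case (C i)
      then show ?thesis using kC_spec[OF C(1)] by (simp add: ker_def)
    qed simp
  qed
  finally show ?thesis .
qed

lemma f_lc_wF_TA:
  assumes a: "a \<in> fsupp_on TA"
  shows "f (lc a wF) = lc a wG"
proof -
  have aF: "a \<in> fsupp_on (TA \<union> TB \<union> TC)" by (rule fsupp_mono[OF a]) blast
  have "diag_map x a = a"
  proof
    fix t show "diag_map x a t = a t"
      by (cases t rule: idx_cases) (simp_all add: fsupp_out[OF a])
  qed
  then show ?thesis using f_lc_wF[OF aF] by simp
qed


lemma wG_indep: "c \<in> fsupp_on (TA \<union> TB \<union> TD) \<Longrightarrow> mvec (lc c wG) \<Longrightarrow> \<forall>t. c t \<in> m"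
  using echelon_indep[OF woJ wG_echelon] by blast

lemma wG_span:
  assumes v: "v \<in> fsupp_on J"
  shows "\<exists>c\<in>fsupp_on (TA \<union> TB \<union> TD). mvec (\<lambda>j. v j - lc c wG j)"
proof (rule echelon_span[OF woJ submod_fsupp_on wG_echelon wG_fsupp _ v])
  fix u l assume "u \<in> fsupp_on J" "islead ltJ u l"
  then have "l \<in> J" by (rule islead_in)
  then show "l \<in> lamG ` (TA \<union> TB \<union> TD)" using J_split by (simp add: image_Un lam_image)
qed


text \<open>Spanning: reduce modulo the image, then modulo \<open>x\<close>-preimages of the image, and what
  remains lies in the kernel.\<close>
lemma image_span:
  assumes v: "v \<in> fsupp_on I"
  shows "\<exists>a\<in>fsupp_on TA. mvec (\<lambda>j. f v j - lc a wG j)"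
proof (rule echelon_span[OF woJ submod_image[OF f] echelon_mono[OF wG_echelon]])
  fix t assume "t \<in> TA"
  then obtain a where "a \<in> A0" "t = Inl (Inr a)" by (auto simp: TA_def)
  then show "wG t \<in> f ` fsupp_on I" using vA_spec by simp
next
  fix u l assume "u \<in> f ` fsupp_on I" "islead ltJ u l"
  then show "l \<in> lamG ` TA" by (auto simp: lam_image A0_def)
qed (use v in auto)

lemma xpre_span:
  assumes h: "h \<in> xpre"
  shows "\<exists>g\<in>fsupp_on (TA \<union> TB). mvec (\<lambda>j. h j - lc g wG j)"
proof (rule echelon_span[OF woJ xpre_submod echelon_mono[OF wG_echelon] _ _ h])
  fix t assume "t \<in> TA \<union> TB"
  then consider (A) a where "a \<in> A0" "t = Inl (Inr a)" | (B) b where "b \<in> B0" "t = Inr (Inl (Inr b))"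
    by (auto simp: TA_def TB_def)
  then show "wG t \<in> xpre"
  proof cases
    case (A a)
    then show ?thesis using image_in_xpre vA_spec[OF A(1)] by simp
  next
    case (B b)
    then show ?thesis using gB_spec[OF B(1)] by simp
  qed
next
  fix u l assume "u \<in> xpre" "islead ltJ u l"
  then show "l \<in> lamG ` (TA \<union> TB)" by (auto simp: image_Un lam_image B0_def)
qed blast

text \<open>Every \<open>x g\<close> with \<open>g\<close> supported on the \<open>M\<close>- and \<open>N\<close>-parts is \<open>diag(1, \<cdot>x, 0) d\<close> for some \<open>d\<close>,
  using \<open>xR = Rx\<close> on the \<open>N\<close>-part.\<close>
lemma diag_map_rescale:
  assumes g: "g \<in> fsupp_on (TA \<union> TB)"
  obtains d where "d \<in> fsupp_on (TA \<union> TB \<union> TC)" and "diag_map x d = (\<lambda>t. x * g t)"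
proof -
  define d where "d t = (case t of Inl _ \<Rightarrow> x * g t | Inr _ \<Rightarrow> rdiv (x * g t))" for t
  have "d \<in> fsupp_on (TA \<union> TB \<union> TC)"
  proof (rule fsupp_dominated[OF fsupp_mono[OF g]])
    fix t assume "g t = 0" then show "d t = 0" by (cases t) (simp_all add: d_def)
  qed blast
  moreover have "diag_map x d = (\<lambda>t. x * g t)"
  proof
    fix t show "diag_map x d t = x * g t"
    proof (cases t rule: idx_cases)
      case (N s)
      then show ?thesis using rdiv[OF mright[OF x_in_m, of "g t"]] by (simp add: d_def)
    qed (simp_all add: d_def fsupp_out[OF g])
  qed
  ultimately show ?thesis using that by blast
qed

lemma xpre_lift:
  assumes h: "h \<in> xpre"
  obtains d where "d \<in> fsupp_on (TA \<union> TB \<union> TC)" and "f (lc d wF) = (\<lambda>j. x * h j)"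
proof -
  obtain g where g: "g \<in> fsupp_on (TA \<union> TB)" and mg: "mvec (\<lambda>j. h j - lc g wG j)"
    using xpre_span[OF h] by blast
  have xh: "(\<lambda>j. x * h j) = lc (\<lambda>t. x * g t) wG"
    using mvec_kill[OF mg] lc_smul[OF fsupp_finite[OF g], of x wG]
    by (simp add: fun_eq_iff right_diff_distrib)
  obtain d where d: "d \<in> fsupp_on (TA \<union> TB \<union> TC)" and "diag_map x d = (\<lambda>t. x * g t)"
    using diag_map_rescale[OF g] .
  then have "f (lc d wF) = (\<lambda>j. x * h j)" using f_lc_wF[OF d] xh by simp
  then show ?thesis using d that by blast
qed

lemma ker_span:
  assumes k: "k \<in> ker"
  shows "\<exists>c\<in>fsupp_on TC. mvec (\<lambda>i. k i - lc c wF i)"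
proof (rule echelon_span[OF woI ker_submod wF_echelon _ _ k])
  fix t assume "t \<in> TC"
  then show "wF t \<in> ker" using kC_spec by (auto simp: TC_def)
next
  fix u l assume "u \<in> ker" "islead ltI u l"
  then show "l \<in> lamF ` TC" by (auto simp: lam_image C0_def)
qed


lemma wF_span:
  assumes v: "v \<in> fsupp_on I"
  shows "\<exists>c\<in>fsupp_on (TA \<union> TB \<union> TC). mvec (\<lambda>i. v i - lc c wF i)"
proof -
  obtain a where a: "a \<in> fsupp_on TA" and ma: "mvec (\<lambda>j. f v j - lc a wG j)"
    using image_span[OF v] by blast
  have aF: "a \<in> fsupp_on (TA \<union> TB \<union> TC)" by (rule fsupp_mono[OF a]) blast
  have aI: "lc a wF \<in> fsupp_on I" by (rule lc_fsupp[OF aF wF_fsupp])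
  define v1 where "v1 = (\<lambda>i. v i - lc a wF i)"
  have v1: "v1 \<in> fsupp_on I" unfolding v1_def by (rule fsupp_diff[OF v aI])
  have "f v1 = (\<lambda>j. f v j - lc a wG j)"
    unfolding v1_def using lin_diff[OF f v aI] f_lc_wF_TA[OF a] by simp
  then have "mvec (f v1)" using ma by simp
  define h where "h = (\<lambda>j. ldiv (f v1 j))"
  have fv1: "f v1 = (\<lambda>j. x * h j)" unfolding h_def by (rule mvec_ldiv[OF \<open>mvec (f v1)\<close>])
  have "h \<in> xpre"
    using fsupp_map[where g = ldiv, OF ldiv_0 lin_in[OF f v1]] fv1[symmetric] v1
    by (simp add: xpre_def h_def)
  then obtain d where d: "d \<in> fsupp_on (TA \<union> TB \<union> TC)" and "f (lc d wF) = (\<lambda>j. x * h j)"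
    by (rule xpre_lift)
  then have fd: "f (lc d wF) = f v1" using fv1 by simp
  have dI: "lc d wF \<in> fsupp_on I" by (rule lc_fsupp[OF d wF_fsupp])
  define k where "k = (\<lambda>i. v1 i - lc d wF i)"
  have "k \<in> ker"
    using fsupp_diff[OF v1 dI] lin_diff[OF f v1 dI] fd by (simp add: k_def ker_def)
  then obtain c where c: "c \<in> fsupp_on TC" and mc: "mvec (\<lambda>i. k i - lc c wF i)"
    using ker_span by blast
  have cF: "c \<in> fsupp_on (TA \<union> TB \<union> TC)" by (rule fsupp_mono[OF c]) blast
  have "lc (\<lambda>t. a t + d t + c t) wF = (\<lambda>i. lc a wF i + lc d wF i + lc c wF i)"
    using lc_add[OF fsupp_finite[OF fsupp_add[OF aF d]] fsupp_finite[OF cF], of wF]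
      lc_add[OF fsupp_finite[OF aF] fsupp_finite[OF d], of wF] by simp
  then have "(\<lambda>i. v i - lc (\<lambda>t. a t + d t + c t) wF i) = (\<lambda>i. k i - lc c wF i)"
    by (simp add: k_def v1_def algebra_simps)
  then have "mvec (\<lambda>i. v i - lc (\<lambda>t. a t + d t + c t) wF i)" using mc by simp
  then show ?thesis using fsupp_add[OF fsupp_add[OF aF d] cF] by (rule bexI)
qed

text \<open>The key point: a combination of the \<open>gB\<close> that is congruent modulo \<open>m\<close>
  to an element of the image has all coefficients in \<open>m\<close>, as its leading index would
  otherwise lie in both \<open>A0\<close> and \<open>B0\<close>.\<close>
lemma gB_coeffs_in_m:
  assumes e: "e \<in> fsupp_on TB" and v: "v \<in> fsupp_on I"
    and me: "mvec (\<lambda>j. lc e wG j - f v j)"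
  shows "e t \<in> m"
proof (rule ccontr)
  assume "e t \<notin> m"
  then obtain t' where t': "t' \<in> TB" and lead: "islead ltJ (lc e wG) (lamG t')"
    using echelon_lead[OF woJ echelon_mono[OF wG_echelon] e] by blast
  have "islead ltJ (f v) (lamG t')" using lead islead_cong[OF me] by blast
  then have "lamG t' \<in> A0" using v by (auto simp: A0_def)
  moreover have "lamG t' \<in> B0" using t' lam_image by blast
  ultimately show False by (simp add: B0_def)
qed

text \<open>If \<open>\<Sum> c\<^sub>t wF\<^sub>t\<close> lies in \<open>m\<close>, so does its image \<open>\<Sum> diag(1, \<cdot>x, 0) c\<^sub>t wG\<^sub>t\<close>, hence all
  rescaled coefficients.\<close>
lemma wF_indep_diag:
  assumes c: "c \<in> fsupp_on (TA \<union> TB \<union> TC)" and mc: "mvec (lc c wF)"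
  shows "mvec (diag_map x c)"
proof -
  have "mvec (f (lc c wF))" by (rule lin_mvec[OF f lc_fsupp[OF c wF_fsupp] mc])
  then have "mvec (lc (diag_map x c) wG)" by (simp add: f_lc_wF[OF c])
  moreover have "diag_map x c \<in> fsupp_on (TA \<union> TB \<union> TD)"
    by (rule fsupp_mono[OF diag_map_fsupp[OF c]]) blast
  ultimately show ?thesis using wG_indep by (simp add: mvec_def)
qed

lemma wF_indep_TB:
  assumes c: "c \<in> fsupp_on (TA \<union> TB \<union> TC)" and mc: "mvec (lc c wF)" and t: "t \<in> TB"
  shows "c t \<in> m"
proof -
  define d where "d = (\<lambda>t. ldiv (diag_map x c t))"
  have d: "d \<in> fsupp_on (TA \<union> TB)"
    unfolding d_def by (rule fsupp_map[where g = ldiv, OF ldiv_0 diag_map_fsupp[OF c]])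
  have xd: "diag_map x c = (\<lambda>t. x * d t)"
    unfolding d_def by (rule mvec_ldiv[OF wF_indep_diag[OF c mc]])
  define p where "p = (\<lambda>i. ldiv (lc c wF i))"
  have p: "p \<in> fsupp_on I"
    unfolding p_def by (rule fsupp_map[where g = ldiv, OF ldiv_0 lc_fsupp[OF c wF_fsupp]])
  have "(\<lambda>j. x * lc d wG j) = f (lc c wF)"
    using f_lc_wF[OF c] lc_smul[OF fsupp_finite[OF d], of x wG] xd by simp
  also have "\<dots> = (\<lambda>j. x * f p j)"
  proof -
    have "lc c wF = (\<lambda>i. x * p i)" unfolding p_def by (rule mvec_ldiv[OF mc])
    then show ?thesis by (simp only: lin_smul[OF f p])
  qed
  finally have md: "mvec (\<lambda>j. lc d wG j - f p j)" by (rule mvec_cancel_x)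
  text \<open>Split \<open>d\<close> into its \<open>M\<close>-part \<open>dA\<close>, which is realised in the image, and its \<open>N\<close>-part \<open>dB\<close>.\<close>
  define dA where "dA = restr TA d"
  define dB where "dB = restr (- TA) d"
  have dA: "dA \<in> fsupp_on TA" unfolding dA_def by (rule fsupp_mono[OF fsupp_restr[OF d]]) blast
  have dB: "dB \<in> fsupp_on TB" unfolding dB_def by (rule fsupp_mono[OF fsupp_restr[OF d]]) blast
  have "dA \<in> fsupp_on (TA \<union> TB \<union> TC)" by (rule fsupp_mono[OF dA]) blast
  then have dAI: "lc dA wF \<in> fsupp_on I" by (rule lc_fsupp[OF _ wF_fsupp])
  have "lc d wG = (\<lambda>j. f (lc dA wF) j + lc dB wG j)"
    using lc_restr[OF fsupp_finite[OF d], of wG TA] f_lc_wF_TA[OF dA] by (simp add: dA_def dB_def)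
  then have "mvec (\<lambda>j. lc dB wG j - f (\<lambda>i. p i - lc dA wF i) j)"
    using md lin_diff[OF f p dAI] by (simp add: algebra_simps)
  then have "dB t \<in> m" by (rule gB_coeffs_in_m[OF dB fsupp_diff[OF p dAI]])
  moreover obtain b where b: "t = Inr (Inl (Inr b))" using t by (auto simp: TB_def)
  ultimately have "d t \<in> m" by (simp add: dB_def restr_def)
  have "c t * x = x * d t" using fun_cong[OF xd, of t] b by simp
  also have "\<dots> = 0" by (rule x_kills_m(1)[OF \<open>d t \<in> m\<close>])
  finally show ?thesis by (rule ann_left)
qed

lemma wF_indep:
  assumes c: "c \<in> fsupp_on (TA \<union> TB \<union> TC)" and mc: "mvec (lc c wF)"
  shows "\<forall>t. c t \<in> m"
proof
  fix t
  define cAB where "cAB = restr (TA \<union> TB) c"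
  define cC where "cC = restr (- (TA \<union> TB)) c"
  have cAB_m: "cAB s \<in> m" for s
  proof (cases "s \<in> TA")
    case True
    then obtain a where s: "s = Inl (Inr a)" by (auto simp: TA_def)
    have "diag_map x c s \<in> m" using wF_indep_diag[OF c mc] by (simp add: mvec_def)
    then show ?thesis using True s by (simp add: cAB_def restr_def)
  next
    case False
    then show ?thesis using wF_indep_TB[OF c mc] m0 by (simp add: cAB_def restr_def)
  qed
  have "mvec (lc cAB wF)" unfolding cAB_def
    by (rule mvec_lc[OF restr_finite[OF fsupp_finite[OF c]] cAB_m[unfolded cAB_def]])
  moreover have "lc c wF = (\<lambda>i. lc cAB wF i + lc cC wF i)"
    unfolding cAB_def cC_def by (rule lc_restr[OF fsupp_finite[OF c]])
  ultimately have "mvec (lc cC wF)" using mvec_diff[OF mc] by fastforce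
  moreover have "cC \<in> fsupp_on TC" unfolding cC_def by (rule fsupp_mono[OF fsupp_restr[OF c]]) blast
  ultimately have "cC t \<in> m" using echelon_indep[OF woI wF_echelon] by blast
  moreover have "c t = cAB t + cC t" by (simp add: cAB_def cC_def restr_def)
  ultimately show "c t \<in> m" using madd[OF cAB_m[of t]] by simp
qed


definition coordF :: "('i \<Rightarrow> 'a) \<Rightarrow> ('i, 'j) idx \<Rightarrow> 'a" where
  "coordF = inv_into (fsupp_on (TA \<union> TB \<union> TC)) (\<lambda>c. lc c wF)"

definition coordG :: "('j \<Rightarrow> 'a) \<Rightarrow> ('i, 'j) idx \<Rightarrow> 'a" where
  "coordG = inv_into (fsupp_on (TA \<union> TB \<union> TD)) (\<lambda>c. lc c wG)"

lemma wF_basis: "bij_betw (\<lambda>c. lc c wF) (fsupp_on (TA \<union> TB \<union> TC)) (fsupp_on I)"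
  by (rule lc_basis[OF wF_fsupp wF_indep wF_span])

lemma wG_basis: "bij_betw (\<lambda>c. lc c wG) (fsupp_on (TA \<union> TB \<union> TD)) (fsupp_on J)"
  by (rule lc_basis[OF wG_fsupp wG_indep wG_span])

lemma coordF_iso: "lin_iso I (TA \<union> TB \<union> TC) coordF"
  unfolding coordF_def by (rule lin_iso_inv[OF lin_on_lc[OF wF_fsupp] wF_basis])

lemma coordG_iso: "lin_iso J (TA \<union> TB \<union> TD) coordG"
  unfolding coordG_def by (rule lin_iso_inv[OF lin_on_lc[OF wG_fsupp] wG_basis])

lemma coord_commute:
  assumes p: "p \<in> fsupp_on I"
  shows "coordG (f p) = diag_map x (coordF p)"
proof -
  have c: "coordF p \<in> fsupp_on (TA \<union> TB \<union> TC)"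
    using coordF_iso p by (simp add: lin_iso_def lin_on_def)
  have "p \<in> (\<lambda>c. lc c wF) ` fsupp_on (TA \<union> TB \<union> TC)" using wF_basis p by (simp add: bij_betw_def)
  then have "(\<lambda>c. lc c wF) (inv_into (fsupp_on (TA \<union> TB \<union> TC)) (\<lambda>c. lc c wF) p) = p"
    by (rule f_inv_into_f)
  then have "f p = lc (diag_map x (coordF p)) wG" using f_lc_wF[OF c] by (simp add: coordF_def)
  moreover have "diag_map x (coordF p) \<in> fsupp_on (TA \<union> TB \<union> TD)"
    by (rule fsupp_mono[OF diag_map_fsupp[OF c]]) blast
  moreover have "inj_on (\<lambda>c. lc c wG) (fsupp_on (TA \<union> TB \<union> TD))"
    using wG_basis by (simp add: bij_betw_def)
  ultimately show ?thesis using inv_into_f_f unfolding coordG_def by fastforce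
qed

lemma TF_Plus: "TA \<union> TB \<union> TC = Inr ` A0 <+> (Inr ` B0 <+> Inl ` C0)"
  unfolding TA_def TB_def TC_def Plus_def by (simp add: image_Un Un_assoc)

lemma TG_Plus: "TA \<union> TB \<union> TD = Inr ` A0 <+> (Inr ` B0 <+> Inr ` D0)"
  unfolding TA_def TB_def TD_def Plus_def by (simp add: image_Un Un_assoc)

lemma parts_finite: "finite I \<Longrightarrow> finite J \<Longrightarrow> finite A0 \<and> finite B0 \<and> finite C0 \<and> finite D0"
  using finite_subset[OF A0_sub] finite_subset[OF B0_sub] finite_subset[OF C0_sub]
  by (simp add: D0_def)

text \<open>The normal form of \<open>f\<close>, with \<open>M = R^(A0)\<close>, \<open>N = R^(B0)\<close>, \<open>V = R^(C0)\<close>, \<open>W = R^(D0)\<close>.\<close>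
theorem normal_form_exists:
  "\<exists>(A::('i + 'j) set) B C D (\<phi>::('i \<Rightarrow> 'a) \<Rightarrow> ('i, 'j) idx \<Rightarrow> 'a)
      (\<psi>::('j \<Rightarrow> 'a) \<Rightarrow> ('i, 'j) idx \<Rightarrow> 'a).
     lin_iso I (A <+> (B <+> C)) \<phi> \<and> lin_iso J (A <+> (B <+> D)) \<psi>
   \<and> (\<forall>p\<in>fsupp_on I. \<psi> (f p) = diag_map x (\<phi> p))
   \<and> (finite I \<and> finite J \<longrightarrow> finite A \<and> finite B \<and> finite C \<and> finite D)"
proof -
  have "lin_iso I (Inr ` A0 <+> (Inr ` B0 <+> Inl ` C0)) coordF
     \<and> lin_iso J (Inr ` A0 <+> (Inr ` B0 <+> Inr ` D0)) coordG
     \<and> (\<forall>p\<in>fsupp_on I. coordG (f p) = diag_map x (coordF p))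
     \<and> (finite I \<and> finite J \<longrightarrow> finite (Inr ` A0 :: ('i + 'j) set) \<and> finite (Inr ` B0 :: ('i + 'j) set)
        \<and> finite (Inl ` C0 :: ('i + 'j) set) \<and> finite (Inr ` D0 :: ('i + 'j) set))"
    using coordF_iso coordG_iso coord_commute parts_finite by (simp add: TF_Plus TG_Plus)
  then show ?thesis by (intro exI)
qed

end


lemma left_ideal_add_principal:
  fixes L :: "'a::ring_1 set"
  assumes L: "left_ideal L"
  shows "left_ideal {r * a + y | r y. y \<in> L}"
  unfolding left_ideal_def
proof (intro conjI ballI allI)
  show "0 \<in> {r * a + y | r y. y \<in> L}"
    using L unfolding left_ideal_def by (intro CollectI exI[of _ 0] conjI) simp_all
next
  fix u v assume "u \<in> {r * a + y | r y. y \<in> L}" "v \<in> {r * a + y | r y. y \<in> L}"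
  then obtain r1 y1 r2 y2 where "u = r1 * a + y1" "y1 \<in> L" "v = r2 * a + y2" "y2 \<in> L"
    by blast
  then have "u + v = (r1 + r2) * a + (y1 + y2)" "y1 + y2 \<in> L"
    using L by (simp_all add: algebra_simps left_ideal_def)
  then show "u + v \<in> {r * a + y | r y. y \<in> L}" by blast
next
  fix u assume "u \<in> {r * a + y | r y. y \<in> L}"
  then obtain r y where "u = r * a + y" "y \<in> L" by blast
  then have "- u = (- r) * a + (- y)" "- y \<in> L" using L by (simp_all add: left_ideal_def)
  then show "- u \<in> {r * a + y | r y. y \<in> L}" by blast
next
  fix s u assume "u \<in> {r * a + y | r y. y \<in> L}"
  then obtain r y where "u = r * a + y" "y \<in> L" by blast
  then have "s * u = (s * r) * a + s * y" "s * y \<in> L"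
    using L by (simp_all add: algebra_simps left_ideal_def)
  then show "s * u \<in> {r * a + y | r y. y \<in> L}" by blast
qed

text \<open>If \<open>m\<^sup>2 = 0\<close>, elements outside the maximal left ideal \<open>m\<close> are left invertible:
  \<open>Ra + m = R\<close> gives \<open>1 = ra + y\<close> with \<open>y \<in> m\<close>, and \<open>(1 + y)(1 - y) = 1\<close>.\<close>
lemma maximal_left_ideal_left_inverse:
  fixes m :: "'a::ring_1 set"
  assumes max: "maximal_left_ideal m" and sq: "\<forall>a\<in>m. \<forall>b\<in>m. a * b = 0" and a: "a \<notin> m"
  shows "\<exists>b. b * a = 1"
proof -
  let ?L = "{r * a + y | r y. y \<in> m}"
  have m: "left_ideal m" and mx: "\<And>L. left_ideal L \<Longrightarrow> m \<subseteq> L \<Longrightarrow> L \<noteq> UNIV \<Longrightarrow> L = m"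
    using max unfolding maximal_left_ideal_def by blast+
  have "m \<subseteq> ?L"
  proof
    fix y assume "y \<in> m"
    then show "y \<in> ?L" by (intro CollectI exI[of _ 0] exI[of _ y]) simp
  qed
  moreover have "a \<in> ?L" using m by (intro CollectI exI[of _ 1] exI[of _ 0]) (simp add: left_ideal_def)
  ultimately have "?L = UNIV" using mx[OF left_ideal_add_principal[OF m]] a by blast
  then obtain r y where ry: "1 = r * a + y" and y: "y \<in> m" by blast
  have "((1 + y) * r) * a = (1 + y) * (1 - y)" by (simp add: mult.assoc ry)
  also have "\<dots> = 1" using sq y by (simp add: algebra_simps)
  finally show ?thesis by blast
qed

lemma sqzero_localI:
  fixes m :: "'a::ring_1 set"
  assumes max: "maximal_left_ideal m" and sq: "\<forall>a\<in>m. \<forall>b\<in>m. a * b = 0"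
    and princ: "\<forall>y\<in>m - {0}. m = {r * y | r. True} \<and> m = {y * r | r. True}"
    and x: "x \<in> m" "x \<noteq> 0"
  shows "sqzero_local m x"
proof
  have "x \<in> m - {0}" using x by simp
  with princ have mlr: "m = {r * x | r. True} \<and> m = {x * r | r. True}" by (rule bspec)
  then show "m = {r * x | r. True}" "m = {x * r | r. True}" by (rule conjunct1, rule conjunct2)
  show "a \<in> m \<Longrightarrow> b \<in> m \<Longrightarrow> a * b = 0" for a b using sq by simp
  show "x \<noteq> 0" by (rule x(2))
  have li: "left_ideal m" and nU: "m \<noteq> UNIV" using max by (simp_all add: maximal_left_ideal_def)
  have one: "1 \<notin> m"
  proof
    assume "1 \<in> m"
    then have "r * 1 \<in> m" for r using li unfolding left_ideal_def by blast
    then show False using nU by auto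
  qed
  fix a assume a: "a \<notin> m"
  obtain b where b: "b * a = 1" using maximal_left_ideal_left_inverse[OF max sq a] by blast
  have "b \<notin> m"
  proof
    assume "b \<in> m"
    then obtain s where "b = x * s" using mlr by blast
    then have "1 = x * (s * a)" using b by (simp add: mult.assoc)
    then show False using one mlr by blast
  qed
  then obtain c where c: "c * b = 1" using maximal_left_ideal_left_inverse[OF max sq] by blast
  have "c = c * (b * a)" using b by simp
  also have "\<dots> = a" using c by (simp add: mult.assoc[symmetric])
  finally show "\<exists>b. b * a = 1 \<and> a * b = 1" using b c by blast
qed

theorem mainTheorem5:
  fixes m :: "'a::ring_1 set" and x :: 'a
    and I :: "'i set" and J :: "'j set"
    and f :: "('i \<Rightarrow> 'a) \<Rightarrow> ('j \<Rightarrow> 'a)"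
  assumes loc: "local_ring TYPE('a)"
    and max: "maximal_left_ideal m"
    and nz: "m \<noteq> {0}"
    and sq: "\<forall>a\<in>m. \<forall>b\<in>m. a * b = 0"
    and princ: "\<forall>y\<in>m - {0}. m = {r * y | r. True} \<and> m = {y * r | r. True}"
    and x: "x \<in> m" "x \<noteq> 0"
    and f: "lin_on I J f"
  shows "\<exists>(A::('i + 'j) set) B C D
            (\<phi>::('i \<Rightarrow> 'a) \<Rightarrow> (('i + 'j) + (('i + 'j) + ('i + 'j)) \<Rightarrow> 'a))
            (\<psi>::('j \<Rightarrow> 'a) \<Rightarrow> (('i + 'j) + (('i + 'j) + ('i + 'j)) \<Rightarrow> 'a)).
            lin_iso I (A <+> (B <+> C)) \<phi> \<and> lin_iso J (A <+> (B <+> D)) \<psi>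
          \<and> (\<forall>p\<in>fsupp_on I. \<psi> (f p) = diag_map x (\<phi> p))
          \<and> (finite I \<and> finite J \<longrightarrow> finite A \<and> finite B \<and> finite C \<and> finite D)"
proof -
  obtain ltI :: "'i \<Rightarrow> 'i \<Rightarrow> bool" where woI: "strict_wo ltI" using strict_wo_exists by blast
  obtain ltJ :: "'j \<Rightarrow> 'j \<Rightarrow> bool" where woJ: "strict_wo ltJ" using strict_wo_exists by blast
  have "sqzero_local m x" by (rule sqzero_localI[OF max sq princ x])
  then interpret normal_form m x I J f ltI ltJ
    using f woI woJ by (simp add: normal_form_def normal_form_axioms_def)
  show ?thesis by (rule normal_form_exists)
qed

end
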